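(* Let $\mathbb{F}$ be a field, let $G\le\mathrm{GL}(n,\mathbb{F})$, and let $H$ be a normal subgroup of $G$ that is unipotent-by-abelian. If $x\in\mathrm{Rad}\langle H\rangle_{\mathbb{F}}$, then there is a non-zero $G$-submodule of $\mathbb{F}^n$ contained in the nullspace of $x$.
   Context: $G$ and $x$ act on $V=\mathbb{F}^n$ by matrix multiplication (on the same side), and the nullspace of $x$ is $\{v\in V: v$ is sent to $0$ by $x\}$. A group is unipotent-by-abelian if it has a unipotent normal subgroup with abelian quotient. $\langle H\rangle_{\mathbb{F}}$ is the $\mathbb{F}$-enveloping algebra of $H$ (the $\mathbb{F}$-subalgebra of $\mathrm{Mat}(n,\mathbb{F})$ generated by $H$), and $\mathrm{Rad}$ is its Jacobson radical. *)

theory Defs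
  imports "HOL-Analysis.Analysis"
begin

text \<open>Matrices over a field acting on column vectors by A *v v (G and x act on the same side).\<close>

definition matrix_group :: "('a::field^'n^'n) set \<Rightarrow> bool" where
  "matrix_group G \<longleftrightarrow> G \<subseteq> {A. invertible A} \<and> mat 1 \<in> G \<and>
     (\<forall>A\<in>G. \<forall>B\<in>G. A ** B \<in> G) \<and> (\<forall>A\<in>G. matrix_inv A \<in> G)"

definition normal_matrix_subgroup :: "('a::field^'n^'n) set \<Rightarrow> ('a^'n^'n) set \<Rightarrow> bool" where
  "normal_matrix_subgroup H G \<longleftrightarrow> matrix_group H \<and> H \<subseteq> G \<and>
     (\<forall>g\<in>G. \<forall>h\<in>H. g ** h ** matrix_inv g \<in> H)"

definition matpow :: "('a::field^'n^'n) \<Rightarrow> nat \<Rightarrow> 'a^'n^'n" where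
  "matpow A k = ((\<lambda>B. A ** B) ^^ k) (mat 1)"

definition unipotent_matrix :: "('a::field^'n^'n) \<Rightarrow> bool" where
  "unipotent_matrix A \<longleftrightarrow> (\<exists>k. matpow (A - mat 1) k = 0)"

definition unipotent_group :: "('a::field^'n^'n) set \<Rightarrow> bool" where
  "unipotent_group U \<longleftrightarrow> matrix_group U \<and> (\<forall>u\<in>U. unipotent_matrix u)"

text \<open>H/U abelian, with U normal in H, means every commutator of H lies in U.\<close>
definition unipotent_by_abelian :: "('a::field^'n^'n) set \<Rightarrow> bool" where
  "unipotent_by_abelian H \<longleftrightarrow> (\<exists>U. normal_matrix_subgroup U H \<and> unipotent_group U \<and>
     (\<forall>a\<in>H. \<forall>b\<in>H. a ** b ** matrix_inv a ** matrix_inv b \<in> U))"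

inductive_set enveloping_algebra :: "('a::field^'n^'n) set \<Rightarrow> ('a^'n^'n) set"
  for H where
  gen: "h \<in> H \<Longrightarrow> h \<in> enveloping_algebra H"
| one: "mat 1 \<in> enveloping_algebra H"
| add: "A \<in> enveloping_algebra H \<Longrightarrow> B \<in> enveloping_algebra H \<Longrightarrow> A + B \<in> enveloping_algebra H"
| smult: "A \<in> enveloping_algebra H \<Longrightarrow> (\<chi> i j. c * A $ i $ j) \<in> enveloping_algebra H"
| mult: "A \<in> enveloping_algebra H \<Longrightarrow> B \<in> enveloping_algebra H \<Longrightarrow> A ** B \<in> enveloping_algebra H"

definition left_ideal :: "('a::field^'n^'n) set \<Rightarrow> ('a^'n^'n) set \<Rightarrow> bool" where
  "left_ideal R L \<longleftrightarrow> L \<subseteq> R \<and> 0 \<in> L \<and> (\<forall>a\<in>L. \<forall>b\<in>L. a + b \<in> L) \<and> (\<forall>a\<in>L. - a \<in> L) \<and>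
     (\<forall>r\<in>R. \<forall>a\<in>L. r ** a \<in> L)"

definition maximal_left_ideal :: "('a::field^'n^'n) set \<Rightarrow> ('a^'n^'n) set \<Rightarrow> bool" where
  "maximal_left_ideal R L \<longleftrightarrow> left_ideal R L \<and> L \<noteq> R \<and>
     (\<forall>M. left_ideal R M \<and> L \<subseteq> M \<longrightarrow> M = L \<or> M = R)"

definition jacobson_radical :: "('a::field^'n^'n) set \<Rightarrow> ('a^'n^'n) set" where
  "jacobson_radical R = {x \<in> R. \<forall>L. maximal_left_ideal R L \<longrightarrow> x \<in> L}"

definition nullspace :: "('a::field^'n^'n) \<Rightarrow> ('a^'n) set" where
  "nullspace x = {v. x *v v = 0}"

definition G_submodule :: "('a::field^'n^'n) set \<Rightarrow> ('a^'n) set \<Rightarrow> bool" where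
  "G_submodule G W \<longleftrightarrow> 0 \<in> W \<and> (\<forall>v\<in>W. \<forall>w\<in>W. v + w \<in> W) \<and> (\<forall>c. \<forall>v\<in>W. c *s v \<in> W) \<and>
     (\<forall>g\<in>G. \<forall>w\<in>W. g *v w \<in> W)"

end

theory Submission
  imports Defs
begin

text \<open>Let A be the enveloping algebra of H. The annihilator in A of a non-zero vector of a
  simple A-submodule S of F^n is a maximal left ideal, so Rad A kills S, and the common nullspace W
  of Rad A is non-zero. As G normalises H, conjugation by an element of G is an automorphism of A;
  it therefore preserves Rad A, which makes W a G-submodule.\<close>

lemma matrix_add_rdistrib:
  fixes A :: "'a::semiring_1^'p^'n" and B C :: "'a^'n^'m"
  shows "(B + C) ** A = B ** A + C ** A"
  by (vector matrix_matrix_mult_def sum.distrib[symmetric] field_simps)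

lemma mat_mult_eq_scale: "mat c ** A = (\<chi> i j. c * A $ i $ j)"
  for A :: "'a::semiring_1^'m^'n"
  by (simp add: matrix_matrix_mult_def mat_def vec_eq_iff if_distrib if_distribR sum.delta sum.delta'
      cong del: if_weak_cong)

lemma mat_mult_commute: "mat c ** A = A ** mat c"
  for A :: "'a::comm_semiring_1^'n^'n"
  by (simp add: matrix_matrix_mult_def mat_def vec_eq_iff if_distrib if_distribR sum.delta sum.delta'
      mult.commute cong del: if_weak_cong)

lemma mat_mult_vector: "mat c *v v = c *s v"
  for v :: "'a::semiring_1^'n"
  by (simp add: matrix_vector_mult_def mat_def vec_eq_iff if_distrib if_distribR sum.delta sum.delta'
      cong del: if_weak_cong)

lemma matrix_inv:
  assumes "invertible A"
  shows matrix_inv_right: "A ** matrix_inv A = mat 1"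
    and matrix_inv_left: "matrix_inv A ** A = mat 1"
proof -
  have "\<exists>A'. A ** A' = mat 1 \<and> A' ** A = mat 1"
    using assms unfolding invertible_def .
  then have "A ** matrix_inv A = mat 1 \<and> matrix_inv A ** A = mat 1"
    unfolding matrix_inv_def by (rule someI_ex)
  then show "A ** matrix_inv A = mat 1" "matrix_inv A ** A = mat 1" by auto
qed

lemma invertible_matrix_inv:
  assumes "invertible A"
  shows "invertible (matrix_inv A)"
  unfolding invertible_def using matrix_inv[OF assms] by blast

lemma matrix_inv_inv:
  fixes A :: "'a::field^'n^'n"
  assumes "invertible A"
  shows "matrix_inv (matrix_inv A) = A"
proof -
  have "A = A ** (matrix_inv A ** matrix_inv (matrix_inv A))"
    using matrix_inv_right[OF invertible_matrix_inv[OF assms]] by simp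
  also have "\<dots> = matrix_inv (matrix_inv A)"
    by (simp add: matrix_mul_assoc matrix_inv_right[OF assms])
  finally show ?thesis ..
qed

lemma conj_mult:
  assumes "invertible g"
  shows "g ** (A ** B) ** matrix_inv g = (g ** A ** matrix_inv g) ** (g ** B ** matrix_inv g)"
proof -
  have "(g ** A ** matrix_inv g) ** (g ** B ** matrix_inv g)
      = g ** A ** (matrix_inv g ** g) ** B ** matrix_inv g"
    by (simp add: matrix_mul_assoc)
  then show ?thesis by (simp add: matrix_inv_left[OF assms] matrix_mul_assoc)
qed

lemma enveloping_algebra_mat: "mat c \<in> enveloping_algebra H"
  using enveloping_algebra.smult[OF enveloping_algebra.one, where c = c]
  by (simp add: mat_mult_eq_scale[symmetric])

lemma enveloping_algebra_zero: "0 \<in> enveloping_algebra H"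
  using enveloping_algebra_mat[of 0 H] by simp

lemma enveloping_algebra_uminus:
  assumes "A \<in> enveloping_algebra H"
  shows "- A \<in> enveloping_algebra H"
proof -
  have "mat (- 1) ** A = - A"
    by (simp add: mat_mult_eq_scale vec_eq_iff)
  then show ?thesis
    using enveloping_algebra.mult[OF enveloping_algebra_mat assms] by metis
qed

lemma enveloping_algebra_diff:
  assumes "A \<in> enveloping_algebra H" "B \<in> enveloping_algebra H"
  shows "A - B \<in> enveloping_algebra H"
  using enveloping_algebra.add[OF assms(1) enveloping_algebra_uminus[OF assms(2)]] by simp

lemma conj_enveloping_algebra:
  assumes g: "invertible g" and conj_H: "\<And>h. h \<in> H \<Longrightarrow> g ** h ** matrix_inv g \<in> H"
    and "a \<in> enveloping_algebra H"
  shows "g ** a ** matrix_inv g \<in> enveloping_algebra H"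
  using \<open>a \<in> enveloping_algebra H\<close>
proof induction
  case (gen h)
  then show ?case by (blast intro: conj_H enveloping_algebra.gen)
next
  case one
  then show ?case by (simp add: matrix_inv_right[OF g] enveloping_algebra.one)
next
  case (add A B)
  then show ?case
    by (simp add: matrix_add_ldistrib matrix_add_rdistrib enveloping_algebra.add)
next
  case (smult A c)
  have "g ** (mat c ** A) ** matrix_inv g = mat c ** (g ** A ** matrix_inv g)"
    by (metis conj_mult[OF g] mat_mult_commute matrix_inv_right[OF g] matrix_mul_assoc
        matrix_mul_rid)
  then show ?case
    using enveloping_algebra.mult[OF enveloping_algebra_mat smult.IH]
    by (simp add: mat_mult_eq_scale)
next
  case (mult A B)
  then show ?case by (simp add: conj_mult[OF g] enveloping_algebra.mult)
qed

lemma conj_image_enveloping_algebra: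
  assumes G: "matrix_group G" and H: "normal_matrix_subgroup H G" and "g \<in> G"
  shows "(\<lambda>a. g ** a ** matrix_inv g) ` enveloping_algebra H = enveloping_algebra H"
proof -
  have g: "invertible g" "matrix_inv g \<in> G"
    using G \<open>g \<in> G\<close> unfolding matrix_group_def by auto
  have conj_H: "k ** h ** matrix_inv k \<in> H" if "k \<in> G" "h \<in> H" for k h
    using H that unfolding normal_matrix_subgroup_def by blast
  have "matrix_inv g ** a ** g \<in> enveloping_algebra H" if "a \<in> enveloping_algebra H" for a
    using conj_enveloping_algebra[OF invertible_matrix_inv[OF g(1)] conj_H[OF g(2)] that]
    by (simp add: matrix_inv_inv[OF g(1)])
  moreover have "g ** (matrix_inv g ** a ** g) ** matrix_inv g = a" for a
  proof -
    have "g ** (matrix_inv g ** a ** g) ** matrix_inv g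
        = (g ** matrix_inv g) ** a ** (g ** matrix_inv g)"
      by (simp add: matrix_mul_assoc)
    then show ?thesis by (simp add: matrix_inv_right[OF g(1)])
  qed
  ultimately show ?thesis
    using conj_enveloping_algebra[OF g(1) conj_H[OF \<open>g \<in> G\<close>]]
    by (metis (no_types, lifting) image_eqI subsetI subset_antisym image_subsetI)
qed

text \<open>The qualifier in Modules.additive is needed: unqualified, additive is the
  Measure_Space notion of additivity of set functions.\<close>

definition automorphism_preserving :: "('a::field^'n^'n) set \<Rightarrow> ('a^'n^'n \<Rightarrow> 'a^'n^'n) \<Rightarrow> bool"
  where "automorphism_preserving R f \<longleftrightarrow>
    bij f \<and> Modules.additive f \<and> (\<forall>a b. f (a ** b) = f a ** f b) \<and> f ` R = R"

lemma automorphism_preserving_inv: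
  assumes "automorphism_preserving R f"
  shows "automorphism_preserving R (inv f)"
proof -
  have f: "bij f" "Modules.additive f" "\<And>a b. f (a ** b) = f a ** f b" "f ` R = R"
    using assms unfolding automorphism_preserving_def by auto
  have inv_eq: "inv f c = d \<longleftrightarrow> c = f d" for c d
    using f(1) by (metis bij_inv_eq_iff)
  have f_inv_f: "f (inv f a) = a" for a
    using f(1) by (simp add: bij_is_surj surj_f_inv_f)
  have "Modules.additive (inv f)"
  proof (rule Modules.additive.intro)
    fix a b
    show "inv f (a + b) = inv f a + inv f b"
      by (simp add: inv_eq Modules.additive.add[OF f(2)] f_inv_f)
  qed
  moreover have "inv f (a ** b) = inv f a ** inv f b" for a b
    by (simp add: inv_eq f(3) f_inv_f)
  moreover have "inv f ` R = R"
    using f(1,4) by (metis bij_is_inj image_inv_f_f)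
  ultimately show ?thesis
    using f(1) bij_imp_bij_inv unfolding automorphism_preserving_def by blast
qed

lemma automorphism_preserving_conj:
  assumes "invertible g" and "(\<lambda>a. g ** a ** matrix_inv g) ` R = R"
  shows "automorphism_preserving R (\<lambda>a. g ** a ** matrix_inv g)"
  unfolding automorphism_preserving_def
proof (intro conjI allI)
  show "bij (\<lambda>a. g ** a ** matrix_inv g)"
  proof (rule bij_betw_byWitness[where f' = "\<lambda>a. matrix_inv g ** a ** g"])
    have "matrix_inv g ** (g ** a ** matrix_inv g) ** g
        = (matrix_inv g ** g) ** a ** (matrix_inv g ** g)"
      and "g ** (matrix_inv g ** a ** g) ** matrix_inv g
        = (g ** matrix_inv g) ** a ** (g ** matrix_inv g)"
      for a by (simp_all add: matrix_mul_assoc)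
    then show "\<forall>a\<in>UNIV. matrix_inv g ** (g ** a ** matrix_inv g) ** g = a"
      and "\<forall>a\<in>UNIV. g ** (matrix_inv g ** a ** g) ** matrix_inv g = a"
      by (simp_all add: matrix_inv[OF assms(1)])
  qed auto
  show "Modules.additive (\<lambda>a. g ** a ** matrix_inv g)"
    by unfold_locales (simp add: matrix_add_ldistrib matrix_add_rdistrib)
qed (simp_all add: conj_mult[OF assms(1)] assms(2))

lemma left_ideal_image:
  assumes "Modules.additive f" and f_mult: "\<And>a b. f (a ** b) = f a ** f b" and "f ` R = R"
    and "left_ideal R L"
  shows "left_ideal R (f ` L)"
proof -
  have L: "L \<subseteq> R" "0 \<in> L" "\<And>a b. a \<in> L \<Longrightarrow> b \<in> L \<Longrightarrow> a + b \<in> L"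
    "\<And>a. a \<in> L \<Longrightarrow> - a \<in> L" "\<And>r a. r \<in> R \<Longrightarrow> a \<in> L \<Longrightarrow> r ** a \<in> L"
    using assms(4) unfolding left_ideal_def by auto
  show ?thesis unfolding left_ideal_def
  proof (intro conjI ballI)
    show "f ` L \<subseteq> R" using L(1) \<open>f ` R = R\<close> by blast
    show "0 \<in> f ` L" using L(2) Modules.additive.zero[OF assms(1)] by (metis image_eqI)
  next
    fix a b assume "a \<in> f ` L" "b \<in> f ` L"
    then obtain a' b' where "a' \<in> L" "b' \<in> L" "a + b = f (a' + b')"
      using Modules.additive.add[OF assms(1)] by auto
    then show "a + b \<in> f ` L" using L(3) by blast
  next
    fix a assume "a \<in> f ` L"
    then obtain a' where "a' \<in> L" "- a = f (- a')"
      using Modules.additive.minus[OF assms(1)] by auto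
    then show "- a \<in> f ` L" using L(4) by blast
  next
    fix r a assume "r \<in> R" "a \<in> f ` L"
    then obtain r' a' where "r' \<in> R" "r = f r'" "a' \<in> L" "a = f a'"
      using \<open>f ` R = R\<close> by blast
    then have "r ** a = f (r' ** a')" "r' ** a' \<in> L" using L(5) f_mult by auto
    then show "r ** a \<in> f ` L" by blast
  qed
qed

lemma maximal_left_ideal_image:
  assumes f: "automorphism_preserving R f" and "maximal_left_ideal R L"
  shows "maximal_left_ideal R (f ` L)"
proof -
  have f_props: "inj f" "Modules.additive f" "\<And>a b. f (a ** b) = f a ** f b" "f ` R = R"
    using f unfolding automorphism_preserving_def by (auto dest: bij_is_inj)
  have inv_props: "Modules.additive (inv f)" "\<And>a b. inv f (a ** b) = inv f a ** inv f b"
    "inv f ` R = R"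
    using automorphism_preserving_inv[OF f] unfolding automorphism_preserving_def by auto
  have L: "left_ideal R L" "L \<noteq> R" "\<And>M. left_ideal R M \<Longrightarrow> L \<subseteq> M \<Longrightarrow> M = L \<or> M = R"
    using assms(2) unfolding maximal_left_ideal_def by blast+
  have f_inv_f: "f ` inv f ` M = M" for M
    using f unfolding automorphism_preserving_def by (simp add: bij_is_surj image_f_inv_f)
  show ?thesis unfolding maximal_left_ideal_def
  proof (intro conjI allI impI)
    show "left_ideal R (f ` L)" using left_ideal_image[OF f_props(2-4) L(1)] .
    show "f ` L \<noteq> R" using L(2) f_props(1,4) by (metis inj_image_eq_iff)
  next
    fix M assume M: "left_ideal R M \<and> f ` L \<subseteq> M"
    then have "inv f ` M = L \<or> inv f ` M = R"
      using L(3)[OF left_ideal_image[OF inv_props, of M]] f_props(1)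
      by (metis image_inv_f_f image_mono)
    then show "M = f ` L \<or> M = R" using f_inv_f f_props(4) by metis
  qed
qed

lemma jacobson_radical_image:
  assumes f: "automorphism_preserving R f" and "x \<in> jacobson_radical R"
  shows "f x \<in> jacobson_radical R"
  unfolding jacobson_radical_def
proof (intro CollectI conjI allI impI)
  show "f x \<in> R"
    using assms unfolding automorphism_preserving_def jacobson_radical_def by blast
  fix L assume "maximal_left_ideal R L"
  then have "x \<in> inv f ` L"
    using assms(2) maximal_left_ideal_image[OF automorphism_preserving_inv[OF f]]
    unfolding jacobson_radical_def by blast
  then show "f x \<in> L"
    using f unfolding automorphism_preserving_def by (auto simp: bij_is_surj surj_f_inv_f)
qed

definition invariant_subspace :: "('a::field^'n^'n) set \<Rightarrow> ('a^'n) set \<Rightarrow> bool" where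
  "invariant_subspace R T \<longleftrightarrow> vec.subspace T \<and> (\<forall>a\<in>R. \<forall>t\<in>T. a *v t \<in> T)"

definition simple_invariant_subspace :: "('a::field^'n^'n) set \<Rightarrow> ('a^'n) set \<Rightarrow> bool" where
  "simple_invariant_subspace R S \<longleftrightarrow> invariant_subspace R S \<and> S \<noteq> {0} \<and>
     (\<forall>T. invariant_subspace R T \<and> T \<noteq> {0} \<and> T \<subseteq> S \<longrightarrow> T = S)"

lemma ex_simple_invariant_subspace: "\<exists>S. simple_invariant_subspace R (S :: ('a::field^'n) set)"
proof -
  let ?P = "\<lambda>T::('a^'n) set. invariant_subspace R T \<and> T \<noteq> {0}"
  have "(\<chi> i. 1) \<noteq> (0 :: 'a^'n)" by (simp add: vec_eq_iff)
  then have "?P UNIV" unfolding invariant_subspace_def by auto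
  then obtain S where S: "?P S" and min: "\<And>T. ?P T \<Longrightarrow> vec.dim S \<le> vec.dim T"
    using ex_has_least_nat[of ?P UNIV vec.dim] by blast
  have "T = S" if "?P T" "T \<subseteq> S" for T
    using vec.subspace_dim_equal[of T S] S that min unfolding invariant_subspace_def by blast
  with S have "simple_invariant_subspace R S" unfolding simple_invariant_subspace_def by blast
  then show ?thesis ..
qed

lemma left_ideal_annihilator:
  "left_ideal (enveloping_algebra H) {a \<in> enveloping_algebra H. a *v s = 0}"
  unfolding left_ideal_def
  by (auto simp: enveloping_algebra_zero enveloping_algebra_uminus enveloping_algebra.add
      enveloping_algebra.mult matrix_vector_mult_add_rdistrib matrix_vector_mul_assoc[symmetric]
      matrix_vector_mult_diff_rdistrib[of 0, simplified])

lemma invariant_subspace_left_ideal_orbit: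
  assumes "left_ideal (enveloping_algebra H) M"
  shows "invariant_subspace (enveloping_algebra H) ((\<lambda>m. m *v s) ` M)"
  unfolding invariant_subspace_def vec.subspace_def
proof (intro conjI ballI allI)
  have M: "0 \<in> M" "\<And>a b. a \<in> M \<Longrightarrow> b \<in> M \<Longrightarrow> a + b \<in> M"
    "\<And>r a. r \<in> enveloping_algebra H \<Longrightarrow> a \<in> M \<Longrightarrow> r ** a \<in> M"
    using assms unfolding left_ideal_def by auto
  show "0 \<in> (\<lambda>m. m *v s) ` M" using M(1) by force
  show "x + y \<in> (\<lambda>m. m *v s) ` M"
    if "x \<in> (\<lambda>m. m *v s) ` M" "y \<in> (\<lambda>m. m *v s) ` M" for x y
    using that M(2) by (auto simp: matrix_vector_mult_add_rdistrib[symmetric])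
  show "c *s x \<in> (\<lambda>m. m *v s) ` M" if "x \<in> (\<lambda>m. m *v s) ` M" for c x
    using that M(3)[OF enveloping_algebra_mat[of c]]
    by (auto simp: matrix_vector_mul_assoc mat_mult_vector[symmetric])
  show "r *v x \<in> (\<lambda>m. m *v s) ` M"
    if "r \<in> enveloping_algebra H" "x \<in> (\<lambda>m. m *v s) ` M" for r x
    using that M(3) by (auto simp: matrix_vector_mul_assoc)
qed

lemma annihilator_maximal_left_ideal:
  fixes H :: "('a::field^'n^'n) set" and S :: "('a^'n) set"
  defines "A \<equiv> enveloping_algebra H"
  assumes "simple_invariant_subspace A S" and "s \<in> S" "s \<noteq> 0"
  shows "maximal_left_ideal A {a \<in> A. a *v s = 0}"
proof -
  have S: "invariant_subspace A S"
    and S_min: "\<And>T. invariant_subspace A T \<Longrightarrow> T \<noteq> {0} \<Longrightarrow> T \<subseteq> S \<Longrightarrow> T = S"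
    using assms(2) unfolding simple_invariant_subspace_def by auto
  have "M = {a \<in> A. a *v s = 0} \<or> M = A"
    if M: "left_ideal A M" "{a \<in> A. a *v s = 0} \<subseteq> M" for M
  proof -
    have M_ideal: "M \<subseteq> A" "\<And>a b. a \<in> M \<Longrightarrow> b \<in> M \<Longrightarrow> a + b \<in> M"
      "\<And>r a. r \<in> A \<Longrightarrow> a \<in> M \<Longrightarrow> r ** a \<in> M"
      using M(1) unfolding left_ideal_def by auto
    let ?T = "(\<lambda>m. m *v s) ` M"
    have "?T \<subseteq> S"
      using S M_ideal(1) \<open>s \<in> S\<close> unfolding invariant_subspace_def by blast
    then consider "?T = {0}" | "?T = S"
      using S_min invariant_subspace_left_ideal_orbit[OF M(1)[unfolded A_def]] unfolding A_def
      by blast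
    then show ?thesis
    proof cases
      case 1
      then show ?thesis using M M_ideal(1) by blast
    next
      case 2
      then obtain m where m: "m \<in> M" "m *v s = s" using \<open>s \<in> S\<close> by force
      have "mat 1 - m \<in> {a \<in> A. a *v s = 0}"
        using m M_ideal(1) enveloping_algebra_diff[OF enveloping_algebra.one]
        unfolding A_def by (auto simp: matrix_vector_mult_diff_rdistrib)
      then have "mat 1 \<in> M"
        using M(2) M_ideal(2)[OF _ m(1)] by fastforce
      then show ?thesis using M_ideal(1) M_ideal(3)[of _ "mat 1"] by fastforce
    qed
  qed
  moreover have "{a \<in> A. a *v s = 0} \<noteq> A"
    using enveloping_algebra.one \<open>s \<noteq> 0\<close> unfolding A_def by force
  ultimately show ?thesis
    using left_ideal_annihilator[of H s, folded A_def] unfolding maximal_left_ideal_def by blast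
qed

lemma jacobson_radical_annihilates_simple_invariant_subspace:
  fixes H :: "('a::field^'n^'n) set" and S :: "('a^'n) set"
  defines "A \<equiv> enveloping_algebra H"
  assumes "simple_invariant_subspace A S" and "a \<in> jacobson_radical A" and "s \<in> S"
  shows "a *v s = 0"
proof (cases "s = 0")
  case False
  then have "maximal_left_ideal A {b \<in> A. b *v s = 0}"
    using annihilator_maximal_left_ideal assms unfolding A_def by blast
  then show ?thesis using \<open>a \<in> jacobson_radical A\<close> unfolding jacobson_radical_def by blast
qed simp

lemma jacobson_radical_conj:
  assumes G: "matrix_group G" and H: "normal_matrix_subgroup H G" and "g \<in> G"
    and "a \<in> jacobson_radical (enveloping_algebra H)"
  shows "matrix_inv g ** a ** g \<in> jacobson_radical (enveloping_algebra H)"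
proof -
  have g: "invertible g" "matrix_inv g \<in> G"
    using G \<open>g \<in> G\<close> unfolding matrix_group_def by auto
  have "automorphism_preserving (enveloping_algebra H)
      (\<lambda>b. matrix_inv g ** b ** matrix_inv (matrix_inv g))"
    using automorphism_preserving_conj[OF invertible_matrix_inv[OF g(1)]]
      conj_image_enveloping_algebra[OF G H g(2)] by blast
  from jacobson_radical_image[OF this assms(4)] show ?thesis
    by (simp add: matrix_inv_inv[OF g(1)])
qed

lemma G_submodule_common_nullspace:
  assumes "\<And>g. g \<in> G \<Longrightarrow> invertible g"
    and "\<And>g a. g \<in> G \<Longrightarrow> a \<in> J \<Longrightarrow> matrix_inv g ** a ** g \<in> J"
  shows "G_submodule G {v. \<forall>a\<in>J. a *v v = 0}"
  unfolding G_submodule_def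
proof (intro conjI ballI allI)
  fix g w assume "g \<in> G" "w \<in> {v. \<forall>a\<in>J. a *v v = 0}"
  have "a *v (g *v w) = 0" if "a \<in> J" for a
  proof -
    have "a *v (g *v w) = g *v ((matrix_inv g ** a ** g) *v w)"
      using matrix_inv_right[OF assms(1)[OF \<open>g \<in> G\<close>]]
      by (simp add: matrix_vector_mul_assoc matrix_mul_assoc)
    also have "\<dots> = 0"
      using assms(2)[OF \<open>g \<in> G\<close> that] \<open>w \<in> _\<close> by simp
    finally show ?thesis .
  qed
  then show "g *v w \<in> {v. \<forall>a\<in>J. a *v v = 0}" by blast
qed (auto simp: matrix_vector_right_distrib vector_scalar_commute)

theorem lemma3p2:
  fixes G H :: "('a::field^'n^'n) set" and x :: "'a^'n^'n"
  assumes "matrix_group G"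
    and "normal_matrix_subgroup H G"
    and "unipotent_by_abelian H"
    and "x \<in> jacobson_radical (enveloping_algebra H)"
  shows "\<exists>W. G_submodule G W \<and> W \<noteq> {0} \<and> W \<subseteq> nullspace x"
proof -
  let ?J = "jacobson_radical (enveloping_algebra H)"
  let ?W = "{v. \<forall>a\<in>?J. a *v v = 0}"
  obtain S where S: "simple_invariant_subspace (enveloping_algebra H) S"
    using ex_simple_invariant_subspace by blast
  have "G_submodule G ?W"
  proof (rule G_submodule_common_nullspace)
    show "invertible g" if "g \<in> G" for g
      using assms(1) that unfolding matrix_group_def by blast
    show "matrix_inv g ** a ** g \<in> ?J" if "g \<in> G" "a \<in> ?J" for g a
      using jacobson_radical_conj[OF assms(1,2) that] .
  qed
  moreover have "?W \<noteq> {0}"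
  proof -
    have "0 \<in> S" "S \<noteq> {0}"
      using S vec.subspace_0 unfolding simple_invariant_subspace_def invariant_subspace_def by auto
    then obtain s where "s \<in> S" "s \<noteq> 0" by blast
    moreover have "s \<in> ?W"
      using jacobson_radical_annihilates_simple_invariant_subspace[OF S _ \<open>s \<in> S\<close>] by simp
    ultimately show ?thesis by blast
  qed
  moreover have "?W \<subseteq> nullspace x"
    using assms(4) unfolding nullspace_def by blast
  ultimately show ?thesis by blast
qed

end
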